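(* Let $m\ge3$ and let $\Omega\subset\mathbb{S}^m_+$ be an open domain with $\partial\Omega=\mathcal{V}_1\cup\mathcal{V}_2$, $\mathcal{V}_1\cap\mathcal{V}_2=\emptyset$, where $\mathcal{V}_1$ is a compact (not necessarily connected) hypersurface of $\mathbb{S}^m$ containing $\partial\mathbb{S}^m_+$ and $\mathcal{V}_2$ is a finite union of disjoint compact submanifolds of $\mathbb{S}^m$ (possibly points). Let $\rho\in C^{2,\alpha}(\Omega\cup\mathcal{V}_1)$, $g=e^{2\rho}g_0$, with $h(g)=c$ on $\partial\mathbb{S}^m_+$ for a constant $c\in\mathbb{R}$, and assume $\lim_{x\to q}\big(e^{2\rho(x)}+|\nabla\rho(x)|^2\big)=+\infty$ for all $q\in\mathcal{V}_2$. Set $\mathcal{V}_1'=\mathcal{V}_1\setminus\partial\mathbb{S}^m_+$. Then there exists $t_0\ge0$ such that for every $t>t_0$, $\phi_t(\Omega\cup\mathcal{V}_1')$ is contained in the half-space $\{y\in\mathbb{H}^{m+1}:\langle\!\langle y,(0,e_{m+1})\rangle\!\rangle\ge -e^{-t}c\}$, i.e. the side of the equidistant hypersurface $E(-e^{-t}c)$ whose ideal boundary contains the north pole ${\bf n}$.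
   Context: $\mathbb{S}^m\subset\mathbb{R}^{m+1}$ is the unit sphere with round metric $g_0$; $\nabla,|\cdot|$ w.r.t. $g_0$; ${\bf n}=e_{m+1}$ is the north pole, $\mathbb{S}^m_+=\{x\in\mathbb{S}^m:x_{m+1}>0\}$, $\partial\mathbb{S}^m_+=\{x_{m+1}=0\}$. $\mathbb{L}^{m+2}$ is $\mathbb{R}^{m+2}$ with $\langle\!\langle x,y\rangle\!\rangle=-x_0y_0+\sum_{i=1}^{m+1}x_iy_i$, $\mathbb{H}^{m+1}=\{x:\langle\!\langle x,x\rangle\!\rangle=-1,x_0>0\}$, and $E(s)=\{y\in\mathbb{H}^{m+1}:\langle\!\langle y,(0,e_{m+1})\rangle\!\rangle=s\}$. For $\rho\in C^1$ the associated map is $\phi^\rho(x)=\frac{e^{\rho}}{2}\big(1+e^{-2\rho}(1+|\nabla\rho|^2)\big)(1,x)+e^{-\rho}(0,-x+\nabla\rho)$, and $\phi_t:=\phi^{\rho+t}$ (parallel flow). The mean curvature of $\partial\mathbb{S}^m_+$ w.r.t. $g=e^{2\rho}g_0$ and the unit normal $e^{-\rho}e_{m+1}$ pointing into $\mathbb{S}^m_+$ is $h(g)=-e^{-\rho}\langle\nabla\rho,e_{m+1}\rangle$ (normalized mean curvature; this is the case $r=\pi/2$, $p={\bf n}$ of $h(g)=e^{-\rho}(\cot r-\partial\rho/\partial\nu)$). *)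

theory Defs
  imports "HOL-Analysis.Analysis"
begin

text \<open>Ambient space R^(m+1) is an arbitrary Euclidean space 'a with DIM('a) = m+1;
  the north pole is a unit vector n.\<close>

definition partial :: "('a::euclidean_space \<Rightarrow> real) \<Rightarrow> 'a \<Rightarrow> 'a \<Rightarrow> real" where
  "partial f b x = frechet_derivative f (at x) b"

fun Ck :: "nat \<Rightarrow> 'a::euclidean_space set \<Rightarrow> ('a \<Rightarrow> real) \<Rightarrow> bool" where
  "Ck 0 U g = continuous_on U g"
| "Ck (Suc k) U g = (continuous_on U g \<and> (\<forall>x\<in>U. g differentiable (at x)) \<and>
      (\<forall>b\<in>Basis. Ck k U (partial g b)))"

definition smooth_on :: "'a::euclidean_space set \<Rightarrow> ('a \<Rightarrow> 'b::euclidean_space) \<Rightarrow> bool" where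
  "smooth_on U f \<longleftrightarrow> (\<forall>b\<in>Basis. \<forall>k. Ck k U (\<lambda>x. f x \<bullet> b))"

definition locally_holder :: "real \<Rightarrow> 'a::euclidean_space set \<Rightarrow> ('a \<Rightarrow> real) \<Rightarrow> bool" where
  "locally_holder \<alpha> U g \<longleftrightarrow> (\<forall>K. compact K \<and> K \<subseteq> U \<longrightarrow>
      (\<exists>L. \<forall>x\<in>K. \<forall>y\<in>K. \<bar>g x - g y\<bar> \<le> L * dist x y powr \<alpha>))"

definition C2alpha_on :: "real \<Rightarrow> 'a::euclidean_space set \<Rightarrow> ('a \<Rightarrow> real) \<Rightarrow> bool" where
  "C2alpha_on \<alpha> U f \<longleftrightarrow> open U \<and> Ck 2 U f \<and>
     (\<forall>b1\<in>Basis. \<forall>b2\<in>Basis. locally_holder \<alpha> U (partial (partial f b1) b2))"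

definition submanifold :: "nat \<Rightarrow> 'a::euclidean_space set \<Rightarrow> bool" where
  "submanifold k M \<longleftrightarrow> (\<forall>p\<in>M. \<exists>W W' \<psi> \<theta> V. open W \<and> p \<in> W \<and> open W' \<and>
      subspace V \<and> dim V = k \<and> homeomorphism W W' \<psi> \<theta> \<and>
      smooth_on W (\<psi> :: 'a \<Rightarrow> 'a) \<and> smooth_on W' (\<theta> :: 'a \<Rightarrow> 'a) \<and> \<psi> ` (M \<inter> W) = W' \<inter> V)"

text \<open>Gradient on the unit sphere w.r.t. the round metric: tangential projection of the
  ambient gradient.\<close>
definition sgrad :: "('a::euclidean_space \<Rightarrow> real) \<Rightarrow> 'a \<Rightarrow> 'a" where
  "sgrad \<rho> x = (let D = (\<Sum>b\<in>Basis. partial \<rho> b x *\<^sub>R b) in D - (D \<bullet> x) *\<^sub>R x)"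

definition lorentz :: "real \<times> 'a::euclidean_space \<Rightarrow> real \<times> 'a \<Rightarrow> real" where
  "lorentz y z = - fst y * fst z + snd y \<bullet> snd z"

definition hyperbolic :: "(real \<times> 'a::euclidean_space) set" where
  "hyperbolic = {y. lorentz y y = -1 \<and> fst y > 0}"

text \<open>phi_t = phi^(rho + t); note grad(rho+t) = grad rho.\<close>
definition phi :: "('a::euclidean_space \<Rightarrow> real) \<Rightarrow> real \<Rightarrow> 'a \<Rightarrow> real \<times> 'a" where
  "phi \<rho> t x = (let r = \<rho> x + t; G = sgrad \<rho> x;
       a = exp r / 2 * (1 + exp (-2 * r) * (1 + (norm G)\<^sup>2))
     in (a, a *\<^sub>R x + exp (- r) *\<^sub>R (G - x)))"

text \<open>Normalized mean curvature of the equator w.r.t. e^(2 rho) g0, normal into the upper hemisphere.\<close>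
definition hmean :: "'a::euclidean_space \<Rightarrow> ('a \<Rightarrow> real) \<Rightarrow> 'a \<Rightarrow> real" where
  "hmean n \<rho> x = - exp (- \<rho> x) * (sgrad \<rho> x \<bullet> n)"

end

(*
  With s = e^(2t), the claim at x is the nonnegativity of e^t <<phi_t(x), (0,n)>> + c, which equals
  x_n (s e^rho + e^(-rho) (|grad rho|^2 - 1)) / 2 + c - h(x), where h = -e^(-rho) <grad rho, n> is
  the mean curvature expression extended off the equator.
  Near the equator h is Lipschitz and equal to c on it, so c - h(x) >= -C x_n, which the term
  s x_n e^rho / 2 beats for large s since rho is bounded there.
  Away from the equator, x_n >= eta: if |grad rho| >= 4/eta the gradient term dominates; otherwise
  rho is bounded below, because e^(2 rho) + |grad rho|^2 blows up at V2, so its sublevel sets have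
  compact closure inside Omega u V1, where rho is continuous.
*)
theory Submission
  imports Defs
begin

section \<open>Lipschitz bounds for \<open>C\<^sup>1\<close> functions on compact sets\<close>

lemma lipschitz_on_mult:
  fixes u v :: "'a::metric_space \<Rightarrow> real"
  assumes "Lu-lipschitz_on S u" "Lv-lipschitz_on S v"
    and "\<And>x. x \<in> S \<Longrightarrow> \<bar>u x\<bar> \<le> Mu" "\<And>x. x \<in> S \<Longrightarrow> \<bar>v x\<bar> \<le> Mv" "0 \<le> Mu" "0 \<le> Mv"
  shows "(Mu * Lv + Mv * Lu)-lipschitz_on S (\<lambda>x. u x * v x)"
proof (rule lipschitz_onI)
  fix x y assume xy: "x \<in> S" "y \<in> S"
  have "u x * v x - u y * v y = u x * (v x - v y) + v y * (u x - u y)"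
    by (simp add: algebra_simps)
  then have "dist (u x * v x) (u y * v y) \<le> \<bar>u x\<bar> * dist (v x) (v y) + \<bar>v y\<bar> * dist (u x) (u y)"
    by (metis abs_mult abs_triangle_ineq dist_real_def)
  also have "\<dots> \<le> Mu * (Lv * dist x y) + Mv * (Lu * dist x y)"
    using assms xy by (intro add_mono mult_mono) (auto intro: lipschitz_onD)
  finally show "dist (u x * v x) (u y * v y) \<le> (Mu * Lv + Mv * Lu) * dist x y"
    by (simp add: algebra_simps)
next
  show "0 \<le> Mu * Lv + Mv * Lu"
    using assms lipschitz_on_nonneg by (metis add_nonneg_nonneg mult_nonneg_nonneg)
qed

lemma exp_lipschitz_on_atMost: "(exp M)-lipschitz_on {..M} exp"
proof -
  have mono: "exp q - exp p \<le> exp M * (q - p)" if "p \<le> q" "q \<le> M" for p q :: real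
  proof -
    have "exp q * (1 + (p - q)) \<le> exp q * exp (p - q)"
      by (simp add: exp_ge_add_one_self)
    then have "exp q - exp p \<le> exp q * (q - p)"
      by (simp add: exp_diff algebra_simps)
    also have "\<dots> \<le> exp M * (q - p)"
      using that by (intro mult_right_mono) auto
    finally show ?thesis .
  qed
  show ?thesis
  proof (rule lipschitz_onI)
    fix p q assume "p \<in> {..M}" "q \<in> {..M}"
    then show "dist (exp p) (exp q) \<le> exp M * dist p q"
      using mono[of p q] mono[of q p] by (cases "p \<le> q") (auto simp: dist_real_def)
  qed simp
qed

text \<open>A \<open>C\<^sup>1\<close> function on a compact set that need not be convex still has one Lipschitz
  constant on all of its convex subsets; this property is stable under sums, products and \<open>exp\<close>.\<close>

definition bounded_convex_lipschitz_on :: "'a::real_normed_vector set \<Rightarrow> ('a \<Rightarrow> real) \<Rightarrow> bool" where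
  "bounded_convex_lipschitz_on K g \<longleftrightarrow>
     bounded (g ` K) \<and> (\<exists>L. \<forall>S. convex S \<longrightarrow> S \<subseteq> K \<longrightarrow> L-lipschitz_on S g)"

lemma bounded_convex_lipschitz_onI:
  assumes "\<And>x. x \<in> K \<Longrightarrow> \<bar>g x\<bar> \<le> M"
    and "\<And>S. convex S \<Longrightarrow> S \<subseteq> K \<Longrightarrow> L-lipschitz_on S g"
  shows "bounded_convex_lipschitz_on K g"
  unfolding bounded_convex_lipschitz_on_def bounded_iff using assms by auto

lemma bounded_convex_lipschitz_onE:
  assumes "bounded_convex_lipschitz_on K g"
  obtains M L where "M > 0" "\<And>x. x \<in> K \<Longrightarrow> \<bar>g x\<bar> \<le> M"
    "\<And>S. convex S \<Longrightarrow> S \<subseteq> K \<Longrightarrow> L-lipschitz_on S g"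
  using assms unfolding bounded_convex_lipschitz_on_def bounded_pos by auto

lemma bounded_convex_lipschitz_on_const: "bounded_convex_lipschitz_on K (\<lambda>x. c)"
  by (rule bounded_convex_lipschitz_onI[where M = "\<bar>c\<bar>"]) (auto intro: lipschitz_on_constant)

lemma bounded_convex_lipschitz_on_inner:
  assumes "bounded K"
  shows "bounded_convex_lipschitz_on K (\<lambda>x. x \<bullet> v)"
proof -
  obtain R where R: "\<And>x. x \<in> K \<Longrightarrow> norm x \<le> R"
    using assms by (auto simp: bounded_iff)
  show ?thesis
  proof (rule bounded_convex_lipschitz_onI)
    show "\<bar>x \<bullet> v\<bar> \<le> R * norm v" if "x \<in> K" for x
      using R[OF that] Cauchy_Schwarz_ineq2[of x v] by (meson mult_right_mono norm_ge_zero order.trans)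
    show "(norm v)-lipschitz_on S (\<lambda>x. x \<bullet> v)" for S
      by (rule lipschitz_onI)
        (auto simp: dist_norm mult.commute simp flip: inner_diff_left intro: Cauchy_Schwarz_ineq2[THEN order_trans])
  qed
qed

lemma bounded_convex_lipschitz_on_minus:
  "bounded_convex_lipschitz_on K g \<Longrightarrow> bounded_convex_lipschitz_on K (\<lambda>x. - g x)"
  by (auto simp: bounded_convex_lipschitz_on_def bounded_minus_comp)

lemma bounded_convex_lipschitz_on_add:
  assumes "bounded_convex_lipschitz_on K g" "bounded_convex_lipschitz_on K h"
  shows "bounded_convex_lipschitz_on K (\<lambda>x. g x + h x)"
proof -
  obtain Mg Lg Mh Lh where "\<And>x. x \<in> K \<Longrightarrow> \<bar>g x\<bar> \<le> Mg" "\<And>x. x \<in> K \<Longrightarrow> \<bar>h x\<bar> \<le> Mh"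
    "\<And>S. convex S \<Longrightarrow> S \<subseteq> K \<Longrightarrow> Lg-lipschitz_on S g"
    "\<And>S. convex S \<Longrightarrow> S \<subseteq> K \<Longrightarrow> Lh-lipschitz_on S h"
    using assms by (metis bounded_convex_lipschitz_onE)
  then show ?thesis
    by (intro bounded_convex_lipschitz_onI[where M = "Mg + Mh" and L = "Lg + Lh"])
      (auto intro: lipschitz_on_add abs_triangle_ineq[THEN order_trans] add_mono)
qed

lemma bounded_convex_lipschitz_on_diff:
  "bounded_convex_lipschitz_on K g \<Longrightarrow> bounded_convex_lipschitz_on K h \<Longrightarrow>
    bounded_convex_lipschitz_on K (\<lambda>x. g x - h x)"
  using bounded_convex_lipschitz_on_add[of K g "\<lambda>x. - h x"] bounded_convex_lipschitz_on_minus
  by fastforce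

lemma bounded_convex_lipschitz_on_mult:
  assumes "bounded_convex_lipschitz_on K g" "bounded_convex_lipschitz_on K h"
  shows "bounded_convex_lipschitz_on K (\<lambda>x. g x * h x)"
proof -
  obtain Mg Lg Mh Lh where M: "Mg > 0" "Mh > 0"
    "\<And>x. x \<in> K \<Longrightarrow> \<bar>g x\<bar> \<le> Mg" "\<And>x. x \<in> K \<Longrightarrow> \<bar>h x\<bar> \<le> Mh"
    and L: "\<And>S. convex S \<Longrightarrow> S \<subseteq> K \<Longrightarrow> Lg-lipschitz_on S g"
    "\<And>S. convex S \<Longrightarrow> S \<subseteq> K \<Longrightarrow> Lh-lipschitz_on S h"
    using assms by (metis bounded_convex_lipschitz_onE)
  show ?thesis
  proof (rule bounded_convex_lipschitz_onI[where M = "Mg * Mh" and L = "Mg * Lh + Mh * Lg"])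
    show "\<bar>g x * h x\<bar> \<le> Mg * Mh" if "x \<in> K" for x
      using M that by (simp add: abs_mult mult_mono')
    show "(Mg * Lh + Mh * Lg)-lipschitz_on S (\<lambda>x. g x * h x)" if "convex S" "S \<subseteq> K" for S
      using M L that by (intro lipschitz_on_mult) auto
  qed
qed

lemma bounded_convex_lipschitz_on_sum:
  assumes "\<And>i. i \<in> I \<Longrightarrow> bounded_convex_lipschitz_on K (g i)"
  shows "bounded_convex_lipschitz_on K (\<lambda>x. \<Sum>i\<in>I. g i x)"
  using assms
proof (induction I rule: infinite_finite_induct)
  case (insert i I)
  then show ?case
    by (simp add: bounded_convex_lipschitz_on_add)
qed (simp_all add: bounded_convex_lipschitz_on_const)

lemma bounded_convex_lipschitz_on_exp:
  assumes "bounded_convex_lipschitz_on K g"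
  shows "bounded_convex_lipschitz_on K (\<lambda>x. exp (g x))"
proof -
  obtain M L where M: "\<And>x. x \<in> K \<Longrightarrow> \<bar>g x\<bar> \<le> M"
    and L: "\<And>S. convex S \<Longrightarrow> S \<subseteq> K \<Longrightarrow> L-lipschitz_on S g"
    using assms by (metis bounded_convex_lipschitz_onE)
  show ?thesis
  proof (rule bounded_convex_lipschitz_onI[where M = "exp M" and L = "exp M * L"])
    show "\<bar>exp (g x)\<bar> \<le> exp M" if "x \<in> K" for x
      using M[OF that] by simp
    show "(exp M * L)-lipschitz_on S (\<lambda>x. exp (g x))" if "convex S" "S \<subseteq> K" for S
    proof (rule lipschitz_on_compose2[OF L[OF that]])
      have "g ` S \<subseteq> {..M}"
        using M that by force
      then show "(exp M)-lipschitz_on (g ` S) exp"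
        using exp_lipschitz_on_atMost lipschitz_on_subset by blast
    qed
  qed
qed

lemma frechet_derivative_abs_le_partials:
  fixes g :: "'a::euclidean_space \<Rightarrow> real"
    and M :: real
  assumes "g differentiable (at x)" "\<And>b. b \<in> Basis \<Longrightarrow> \<bar>partial g b x\<bar> \<le> M"
  shows "\<bar>frechet_derivative g (at x) h\<bar> \<le> DIM('a) * M * norm h"
proof -
  let ?D = "frechet_derivative g (at x)"
  have "?D h = ?D (\<Sum>b\<in>Basis. (h \<bullet> b) *\<^sub>R b)"
    by (simp add: euclidean_representation)
  also have "\<dots> = (\<Sum>b\<in>Basis. (h \<bullet> b) * ?D b)"
    using linear_frechet_derivative[OF assms(1)] by (simp add: linear_sum linear_scale)
  finally have "\<bar>?D h\<bar> \<le> (\<Sum>b\<in>Basis. \<bar>h \<bullet> b * ?D b\<bar>)"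
    by (simp only: sum_abs)
  also have "\<dots> \<le> (\<Sum>b\<in>(Basis :: 'a set). norm h * M)"
    by (rule sum_mono) (use assms(2) in \<open>auto simp: abs_mult partial_def Basis_le_norm intro: mult_mono\<close>)
  finally show ?thesis
    by (simp add: mult_ac)
qed

lemma Ck_Suc_imp_Ck: "Ck (Suc k) U g \<Longrightarrow> Ck k U g"
  by (induction k arbitrary: g) auto

lemma Ck1_imp_bounded_convex_lipschitz_on:
  fixes g :: "'a::euclidean_space \<Rightarrow> real"
  assumes "Ck 1 U g" "compact K" "K \<subseteq> U"
  shows "bounded_convex_lipschitz_on K g"
proof -
  have cont: "continuous_on K g" and dif: "\<And>x. x \<in> K \<Longrightarrow> g differentiable (at x)"
    and partial_cont: "\<And>b. b \<in> Basis \<Longrightarrow> continuous_on K (partial g b)"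
    using assms by (auto intro: continuous_on_subset)
  obtain M where M: "\<And>x. x \<in> K \<Longrightarrow> \<bar>g x\<bar> \<le> M"
    using continuous_on_compact_bound[OF assms(2) cont] by (metis real_norm_def)
  have "\<exists>B. \<forall>x\<in>K. \<bar>partial g b x\<bar> \<le> B" if "b \<in> Basis" for b
    using continuous_on_compact_bound[OF assms(2) partial_cont[OF that]] by (metis real_norm_def)
  then obtain B where B: "\<And>b x. b \<in> Basis \<Longrightarrow> x \<in> K \<Longrightarrow> \<bar>partial g b x\<bar> \<le> B b"
    by metis
  have partial_bound: "\<bar>partial g b x\<bar> \<le> (\<Sum>b\<in>Basis. B b)" if "b \<in> Basis" "x \<in> K" for b x
  proof -
    have "\<bar>partial g b x\<bar> \<le> B b" using B that .
    also have "\<dots> \<le> (\<Sum>b\<in>Basis. B b)"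
      using B that by (intro member_le_sum) (auto intro: order.trans[OF abs_ge_zero])
    finally show ?thesis .
  qed
  define L where "L = real DIM('a) * (\<Sum>b\<in>Basis. B b)"
  show ?thesis
  proof (rule bounded_convex_lipschitz_onI[OF M])
    fix S assume S: "convex S" "S \<subseteq> K"
    show "(max 0 L)-lipschitz_on S g"
    proof (rule bounded_derivative_imp_lipschitz[OF _ S(1)])
      fix x assume "x \<in> S"
      then have x: "x \<in> K"
        using S by blast
      show "(g has_derivative frechet_derivative g (at x)) (at x within S)"
        using dif[OF x] frechet_derivative_works has_derivative_at_withinI by blast
      show "onorm (frechet_derivative g (at x)) \<le> max 0 L"
      proof (rule onorm_le)
        fix h
        have "\<bar>frechet_derivative g (at x) h\<bar> \<le> L * norm h"
          unfolding L_def by (rule frechet_derivative_abs_le_partials[OF dif[OF x] partial_bound[OF _ x]])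
        then show "norm (frechet_derivative g (at x) h) \<le> max 0 L * norm h"
          by (metis max.cobounded2 mult_right_mono norm_ge_zero order_trans real_norm_def)
      qed
    qed simp
  qed
qed

lemma hmean_eq_partials:
  "hmean n \<rho> x = - (exp (- \<rho> x) * ((\<Sum>b\<in>Basis. partial \<rho> b x * (b \<bullet> n))
      - (\<Sum>b\<in>Basis. partial \<rho> b x * (x \<bullet> b)) * (x \<bullet> n)))"
  unfolding hmean_def sgrad_def Let_def
  by (simp add: inner_diff_left inner_sum_left inner_sum_right) (simp add: inner_commute)

lemma Ck2_imp_bounded_convex_lipschitz_on_hmean:
  fixes \<rho> :: "'a::euclidean_space \<Rightarrow> real"
  assumes "Ck 2 U \<rho>" "compact K" "K \<subseteq> U"
  shows "bounded_convex_lipschitz_on K (hmean n \<rho>)"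
proof -
  have C2: "Ck (Suc 1) U \<rho>"
    using assms(1) by (simp add: numeral_2_eq_2 del: Ck.simps)
  then have "\<forall>b\<in>Basis. Ck 1 U (partial \<rho> b)"
    unfolding Ck.simps(2)[of 1] by blast
  then have partials: "\<And>b. b \<in> Basis \<Longrightarrow> bounded_convex_lipschitz_on K (partial \<rho> b)"
    using assms(2,3) Ck1_imp_bounded_convex_lipschitz_on by blast
  have \<rho>: "bounded_convex_lipschitz_on K \<rho>"
    using Ck_Suc_imp_Ck[OF C2] assms(2,3) by (rule Ck1_imp_bounded_convex_lipschitz_on)
  have "bounded K"
    using assms(2) by (rule compact_imp_bounded)
  then show ?thesis
    unfolding hmean_eq_partials
    by (intro bounded_convex_lipschitz_on_minus bounded_convex_lipschitz_on_mult
        bounded_convex_lipschitz_on_exp bounded_convex_lipschitz_on_diff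
        bounded_convex_lipschitz_on_sum bounded_convex_lipschitz_on_inner
        bounded_convex_lipschitz_on_const \<rho> partials)
qed

section \<open>The map \<open>\<phi>\<^sub>t\<close> and the height over the equidistant hypersurface\<close>

lemma sgrad_orthogonal: "norm x = 1 \<Longrightarrow> sgrad \<rho> x \<bullet> x = 0"
  unfolding sgrad_def Let_def by (simp add: inner_diff_left dot_square_norm)

lemma phi_in_hyperbolic:
  assumes "norm x = 1"
  shows "phi \<rho> t x \<in> hyperbolic"
proof -
  define r where "r = \<rho> x + t"
  define G where "G = sgrad \<rho> x"
  define a where "a = exp r / 2 * (1 + exp (-2 * r) * (1 + (norm G)\<^sup>2))"
  have GG: "G \<bullet> G = norm G * norm G"
    by (simp add: power2_eq_square[symmetric] dot_square_norm)
  have Gx: "G \<bullet> x = 0"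
    using sgrad_orthogonal[OF assms] G_def by simp
  have xx: "x \<bullet> x = 1"
    using assms by (simp add: dot_square_norm)
  have phi_eq: "phi \<rho> t x = (a, a *\<^sub>R x + exp (- r) *\<^sub>R (G - x))"
    unfolding phi_def Let_def r_def G_def a_def by simp
  have "a > 0"
    unfolding a_def by (intro mult_pos_pos add_pos_nonneg) auto
  moreover have "(a *\<^sub>R x + exp (- r) *\<^sub>R (G - x)) \<bullet> (a *\<^sub>R x + exp (- r) *\<^sub>R (G - x))
      = (a - exp (- r))\<^sup>2 + exp (- r) ^ 2 * (norm G)\<^sup>2"
    by (simp add: algebra_simps inner_commute Gx xx power2_eq_square GG)
  moreover have "2 * a * exp (- r) = 1 + exp (- r) * exp (- r) * (1 + (norm G)\<^sup>2)"
    unfolding a_def by (simp add: algebra_simps flip: exp_add)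
  then have "- a * a + ((a - exp (- r))\<^sup>2 + exp (- r) ^ 2 * (norm G)\<^sup>2) = -1"
    by (simp add: power2_eq_square algebra_simps)
  ultimately show ?thesis
    unfolding hyperbolic_def lorentz_def phi_eq by simp
qed

text \<open>The quantity \<open>e\<^sup>t \<langle>\<langle>\<phi>\<^sub>t x, (0, n)\<rangle>\<rangle> + c\<close> written in the variable \<open>s = e\<^sup>2\<^sup>t\<close>.\<close>

definition halfspace_margin :: "'a::euclidean_space \<Rightarrow> ('a \<Rightarrow> real) \<Rightarrow> real \<Rightarrow> real \<Rightarrow> 'a \<Rightarrow> real" where
  "halfspace_margin n \<rho> c s x =
     (x \<bullet> n) * (s * exp (\<rho> x) + exp (- \<rho> x) * ((norm (sgrad \<rho> x))\<^sup>2 - 1)) / 2 + c - hmean n \<rho> x"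

lemma exp_mult_lorentz_phi:
  "exp t * lorentz (phi \<rho> t x) (0, n) + c = halfspace_margin n \<rho> c (exp (2 * t)) x"
proof -
  define A where "A = exp (\<rho> x)"
  define T where "T = exp t"
  have "exp (- (\<rho> x + t)) * (A * T) = 1" "exp (-2 * (\<rho> x + t)) * (A * T) ^ 2 = 1"
    "exp (- \<rho> x) * A = 1"
    unfolding A_def T_def by (simp_all add: power2_eq_square flip: exp_add)
  moreover have pos: "A > 0" "T > 0"
    unfolding A_def T_def by auto
  ultimately have "exp (\<rho> x + t) = A * T" "exp (- (\<rho> x + t)) = 1 / (A * T)"
    "exp (-2 * (\<rho> x + t)) = 1 / (A * T) ^ 2" "exp (2 * t) = T ^ 2" "exp (- \<rho> x) = 1 / A"
    unfolding A_def T_def by (simp_all add: exp_add field_simps power2_eq_square flip: exp_add)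
  note exps = this
  show ?thesis
    unfolding phi_def Let_def lorentz_def halfspace_margin_def hmean_def exps A_def[symmetric] T_def[symmetric]
    using pos by (simp add: inner_add_left inner_diff_left field_simps power2_eq_square)
qed

lemma halfspace_margin_eq:
  "halfspace_margin n \<rho> c s x = (x \<bullet> n) * (s * exp (\<rho> x) + exp (- \<rho> x) * ((norm (sgrad \<rho> x))\<^sup>2 - 1)) / 2
     + c + exp (- \<rho> x) * (sgrad \<rho> x \<bullet> n)"
  by (simp add: halfspace_margin_def hmean_def)

lemma phi_in_halfspace:
  assumes "norm x = 1" "0 \<le> halfspace_margin n \<rho> c (exp (2 * t)) x"
  shows "phi \<rho> t x \<in> {y \<in> hyperbolic. lorentz y (0, n) \<ge> - exp (- t) * c}"
proof -
  have "- c \<le> exp t * lorentz (phi \<rho> t x) (0, n)"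
    using assms(2) exp_mult_lorentz_phi[of t \<rho> x n c] by linarith
  then have "- exp (- t) * c \<le> lorentz (phi \<rho> t x) (0, n)"
    by (simp add: exp_minus field_simps)
  then show ?thesis
    using phi_in_hyperbolic[OF assms(1)] by simp
qed

section \<open>Elementary estimates for the height\<close>

lemma margin_nonneg_low_latitude:
  fixes xn s r u M L d :: real
  assumes "0 \<le> xn" "\<bar>r\<bar> \<le> M" "0 \<le> L" "- (2 * L * xn) \<le> d" "exp M * (exp M + 4 * L) \<le> s"
  shows "0 \<le> xn * (s * exp r + exp (- r) * (u\<^sup>2 - 1)) / 2 + d"
proof -
  have "0 \<le> s"
    using assms(3) by (intro order.trans[OF _ assms(5)] mult_nonneg_nonneg) auto
  have "exp (- r) + 4 * L \<le> exp M + 4 * L"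
    using assms(2) by simp
  also have "\<dots> = exp M * (exp M + 4 * L) * exp (- M)"
    by (simp add: exp_minus field_simps)
  also have "\<dots> \<le> s * exp r"
    using assms(2,5) \<open>0 \<le> s\<close> by (intro mult_mono) auto
  finally have "exp (- r) + 4 * L \<le> s * exp r" .
  then have "2 * L \<le> (s * exp r + exp (- r) * (u\<^sup>2 - 1)) / 2"
    by (simp add: algebra_simps) (simp add: add_increasing2)
  then have "2 * L * xn \<le> (s * exp r + exp (- r) * (u\<^sup>2 - 1)) / 2 * xn"
    using assms(1) by (rule mult_right_mono)
  moreover have "(s * exp r + exp (- r) * (u\<^sup>2 - 1)) / 2 * xn = xn * (s * exp r + exp (- r) * (u\<^sup>2 - 1)) / 2"
    by simp
  ultimately show ?thesis
    using assms(4) by linarith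
qed

lemma margin_nonneg_steep_gradient:
  fixes \<eta> xn u g s c r :: real
  assumes "0 < \<eta>" "\<eta> \<le> xn" "\<eta> \<le> 1" "\<bar>g\<bar> \<le> u" "4 \<le> \<eta> * u" "2 * c\<^sup>2 / \<eta> \<le> s"
  shows "0 \<le> xn * (s * exp r + exp (- r) * (u\<^sup>2 - 1)) / 2 + c + exp (- r) * g"
proof -
  have "0 < u"
    using assms(1,5) by (smt (verit, best) zero_less_mult_pos)
  then have u: "4 \<le> u"
    using assms(3,5) by (smt (verit, ccfv_SIG) mult_le_cancel_right2)
  then have "\<eta> * u\<^sup>2 \<ge> 4 * u"
    using assms(5) by (simp add: power2_eq_square)
  moreover have "xn * (u\<^sup>2 - 1) \<ge> \<eta> * (u\<^sup>2 - 1)"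
    using assms(2) u by simp
  ultimately have steep: "xn * (u\<^sup>2 - 1) / 2 + g \<ge> 1"
    using assms(3,4) u by argo
  have s: "s * \<eta> \<ge> 2 * c\<^sup>2" "s \<ge> 0"
    using assms(1,6) by (smt (verit) divide_le_eq zero_le_mult_iff zero_le_power2)+
  have "xn * (s * exp r) / 2 + exp (- r) \<ge> \<bar>c\<bar>"
  proof (cases "exp (- r) \<ge> \<bar>c\<bar>")
    case True
    moreover have "xn * (s * exp r) \<ge> 0"
      using assms(1,2) s(2) by simp
    ultimately show ?thesis
      by simp
  next
    case False
    have "\<bar>c\<bar> * exp (- r) \<le> \<bar>c\<bar> * \<bar>c\<bar>"
      using False by (intro mult_left_mono) auto
    also have "\<dots> \<le> \<eta> * s / 2"
      using s(1) by (simp add: power2_eq_square mult.commute)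
    also have "\<dots> \<le> xn * s / 2"
      using assms(2) s(2) by (simp add: mult_right_mono)
    also have "\<dots> = xn * (s * exp r) / 2 * exp (- r)"
      by (simp flip: exp_add)
    finally have "\<bar>c\<bar> \<le> xn * (s * exp r) / 2"
      by simp
    then show ?thesis
      using exp_gt_zero[of "- r"] by linarith
  qed
  moreover have "xn * (s * exp r + exp (- r) * (u\<^sup>2 - 1)) / 2 + c + exp (- r) * g
      = xn * (s * exp r) / 2 + exp (- r) * (xn * (u\<^sup>2 - 1) / 2 + g) + c"
    by (simp add: field_simps)
  moreover have "exp (- r) * (xn * (u\<^sup>2 - 1) / 2 + g) \<ge> exp (- r)"
    using steep by simp
  ultimately show ?thesis
    by linarith
qed

lemma margin_nonneg_flat_gradient:
  fixes \<eta> xn u g s c r M u0 :: real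
  assumes "0 < \<eta>" "\<eta> \<le> xn" "xn \<le> 1" "\<bar>g\<bar> \<le> u0" "- M \<le> r"
    and "2 * exp M * (exp M * (1/2 + u0) + \<bar>c\<bar>) / \<eta> \<le> s"
  shows "0 \<le> xn * (s * exp r + exp (- r) * (u\<^sup>2 - 1)) / 2 + c + exp (- r) * g"
proof -
  have B: "exp (- r) \<le> exp M" and A: "exp (- M) \<le> exp r"
    using assms(5) by simp_all
  have "xn * (exp (- r) * (u\<^sup>2 - 1)) / 2 = xn * exp (- r) * u\<^sup>2 / 2 - xn * exp (- r) / 2"
    by (simp add: field_simps)
  moreover have "xn * exp (- r) \<le> exp (- r)"
    using assms(3) by simp
  moreover have "xn * exp (- r) * u\<^sup>2 \<ge> 0"
    using assms(1,2) by simp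
  ultimately have gradient_term: "xn * (exp (- r) * (u\<^sup>2 - 1)) / 2 \<ge> - exp (- r) / 2"
    by linarith
  have slope_term: "exp (- r) * g \<ge> - exp M * u0"
    using assms(4) B by (smt (verit, best) exp_gt_zero mult_minus_left mult_minus_right mult_mono'
        zero_less_mult_iff)
  have "0 \<le> 2 * exp M * (exp M * (1/2 + u0) + \<bar>c\<bar>) / \<eta>"
    using assms(1,4) by (intro divide_nonneg_pos mult_nonneg_nonneg add_nonneg_nonneg) auto
  then have "0 \<le> s"
    using assms(6) by linarith
  have "2 * exp M * (exp M * (1/2 + u0) + \<bar>c\<bar>) \<le> \<eta> * s"
    using assms(1,6) by (simp add: field_simps)
  then have "2 * (exp M * (1/2 + u0) + \<bar>c\<bar>) \<le> \<eta> * s * exp (- M)"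
    by (simp add: exp_minus field_simps)
  also have "\<dots> \<le> xn * s * exp r"
    using assms(1,2) A \<open>0 \<le> s\<close> by (intro mult_mono mult_right_mono) simp_all
  finally have growth_term: "xn * (s * exp r) / 2 \<ge> exp M / 2 + exp M * u0 + \<bar>c\<bar>"
    by (simp add: algebra_simps)
  have "xn * (s * exp r + exp (- r) * (u\<^sup>2 - 1)) / 2 + c + exp (- r) * g
      = xn * (s * exp r) / 2 + xn * (exp (- r) * (u\<^sup>2 - 1)) / 2 + c + exp (- r) * g"
    by (simp add: field_simps)
  then show ?thesis
    using gradient_term slope_term growth_term B abs_ge_minus_self[of c] by linarith
qed

section \<open>Near the equator\<close>

lemma nearby_equator_point:
  fixes n x :: "'a::euclidean_space"
  assumes n: "norm n = 1" and x: "norm x = 1" "0 \<le> x \<bullet> n" "x \<bullet> n < 1"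
  obtains x' where "norm x' = 1" "x' \<bullet> n = 0" "norm (x - x') \<le> 2 * (x \<bullet> n)"
proof -
  define xn where "xn = x \<bullet> n"
  define y where "y = x - xn *\<^sub>R n"
  have "n \<bullet> n = 1" "x \<bullet> x = 1"
    using n x by (simp_all add: dot_square_norm)
  then have yn: "y \<bullet> n = 0" and y2: "(norm y)\<^sup>2 = 1 - xn\<^sup>2"
    unfolding y_def xn_def power2_norm_eq_inner
    by (simp_all add: inner_diff_left inner_diff_right inner_commute power2_eq_square algebra_simps)
  have xn: "0 \<le> xn" "xn < 1" "xn\<^sup>2 \<le> xn"
    using x unfolding xn_def by (simp_all add: power2_eq_square mult_left_le_one_le)
  then have "0 < norm y" "norm y \<le> 1"
    using y2 by (auto intro: power2_le_imp_le simp: power2_eq_square mult_strict_left_mono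
        dest: power2_less_imp_less[of _ "norm y"])
  define x' where "x' = (1 / norm y) *\<^sub>R y"
  have "norm x' = 1" "x' \<bullet> n = 0"
    unfolding x'_def using \<open>0 < norm y\<close> yn by auto
  moreover have "norm (x - x') \<le> 2 * xn"
  proof -
    have "x - x' = xn *\<^sub>R n + (1 - 1 / norm y) *\<^sub>R y"
      unfolding x'_def y_def by (simp add: algebra_simps)
    then have "norm (x - x') \<le> norm (xn *\<^sub>R n) + norm ((1 - 1 / norm y) *\<^sub>R y)"
      by (metis norm_triangle_ineq)
    also have "\<dots> = xn + (1 - norm y)"
      using n xn \<open>0 < norm y\<close> \<open>norm y \<le> 1\<close> by (simp add: abs_if field_simps)
    finally have "norm (x - x') \<le> xn + (1 - norm y)" .
    moreover have "1 - norm y \<le> xn"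
      using y2 xn \<open>norm y \<le> 1\<close> power2_le_imp_le[of "norm y" 1]
      by (smt (verit, ccfv_SIG) mult_left_le_one_le norm_ge_zero power2_eq_square)
    ultimately show ?thesis
      by simp
  qed
  ultimately show ?thesis
    using that unfolding xn_def by blast
qed

lemma compact_cball_neighbourhood:
  fixes E :: "'a::euclidean_space set"
  assumes "compact E" "open U" "E \<subseteq> U"
  obtains e K where "e > 0" "compact K" "K \<subseteq> U" "\<And>p. p \<in> E \<Longrightarrow> cball p e \<subseteq> K"
proof -
  obtain e where e: "e > 0" "(\<Union>x\<in>E. cball x e) \<subseteq> U"
    using compact_subset_open_imp_cball_epsilon_subset assms by blast
  define K where "K = {p + y | p y. p \<in> E \<and> y \<in> cball (0::'a) e}"
  have "compact K"
    unfolding K_def using assms(1) by (intro compact_sums) auto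
  moreover have cball_K: "cball p e \<subseteq> K" if "p \<in> E" for p
  proof
    fix z assume "z \<in> cball p e"
    then have "z = p + (z - p)" "z - p \<in> cball 0 e"
      by (auto simp: dist_norm norm_minus_commute)
    then show "z \<in> K"
      unfolding K_def using that by blast
  qed
  moreover have "K \<subseteq> U"
  proof
    fix z assume "z \<in> K"
    then obtain p y where "z = p + y" "p \<in> E" "y \<in> cball 0 e"
      unfolding K_def by blast
    then show "z \<in> U"
      using e(2) by (force simp: dist_norm)
  qed
  ultimately show ?thesis
    using that e(1) by blast
qed

lemma halfspace_margin_nonneg_near_equator:
  fixes n :: "'a::euclidean_space" and \<rho> :: "'a \<Rightarrow> real"
  assumes n: "norm n = 1" and U: "open U" "{x \<in> sphere 0 1. x \<bullet> n = 0} \<subseteq> U" and C: "Ck 2 U \<rho>"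
    and h: "\<forall>x\<in>sphere 0 1. x \<bullet> n = 0 \<longrightarrow> hmean n \<rho> x = c"
  shows "\<exists>\<eta>. 0 < \<eta> \<and> \<eta> \<le> 1 \<and> (\<forall>\<^sub>F s in at_top. \<forall>x\<in>sphere 0 1.
           0 \<le> x \<bullet> n \<longrightarrow> x \<bullet> n < \<eta> \<longrightarrow> 0 \<le> halfspace_margin n \<rho> c s x)"
proof -
  define E where "E = {x \<in> sphere (0::'a) 1. x \<bullet> n = 0}"
  have "E = sphere 0 1 \<inter> {x. x \<bullet> n = 0}"
    unfolding E_def by auto
  moreover have "closed {x :: 'a. x \<bullet> n = 0}"
    by (intro closed_Collect_eq continuous_intros)
  ultimately have "compact E"
    by (simp add: compact_Int_closed)
  then obtain e K where e: "e > 0" and K: "compact K" "K \<subseteq> U" and cball_K: "\<And>p. p \<in> E \<Longrightarrow> cball p e \<subseteq> K"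
    using compact_cball_neighbourhood[OF \<open>compact E\<close> U(1)] U(2) unfolding E_def by blast
  obtain L where L: "\<And>S. convex S \<Longrightarrow> S \<subseteq> K \<Longrightarrow> L-lipschitz_on S (hmean n \<rho>)"
    using Ck2_imp_bounded_convex_lipschitz_on_hmean[OF C K]
    by (metis bounded_convex_lipschitz_onE)
  have "continuous_on K \<rho>"
    using C K(2) by (auto simp: numeral_2_eq_2 intro: continuous_on_subset)
  then obtain M where M: "\<And>x. x \<in> K \<Longrightarrow> \<bar>\<rho> x\<bar> \<le> M"
    using continuous_on_compact_bound[OF K(1)] by (metis real_norm_def)
  define \<eta> where "\<eta> = min 1 (e / 2)"
  have "\<forall>x\<in>sphere 0 1. 0 \<le> x \<bullet> n \<longrightarrow> x \<bullet> n < \<eta> \<longrightarrow> 0 \<le> halfspace_margin n \<rho> c s x"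
    if s: "exp M * (exp M + 4 * L) \<le> s" for s
  proof (intro ballI impI)
    fix x :: 'a assume x: "x \<in> sphere 0 1" "0 \<le> x \<bullet> n" "x \<bullet> n < \<eta>"
    then obtain x' where x': "x' \<in> E" "norm (x - x') \<le> 2 * (x \<bullet> n)"
      using nearby_equator_point[OF n, of x] unfolding E_def \<eta>_def by auto
    then have "x \<in> cball x' e"
      using x(3) unfolding \<eta>_def by (simp add: dist_norm norm_minus_commute)
    moreover have lip: "L-lipschitz_on (cball x' e) (hmean n \<rho>)"
      using L cball_K[OF x'(1)] by simp
    ultimately have "\<bar>hmean n \<rho> x - hmean n \<rho> x'\<bar> \<le> L * norm (x - x')"
      using lipschitz_on_normD[OF lip] e(1) by simp
    also have "\<dots> \<le> L * (2 * (x \<bullet> n))"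
      using x'(2) lipschitz_on_nonneg[OF lip] by (rule mult_left_mono)
    finally have "hmean n \<rho> x - c \<le> 2 * L * (x \<bullet> n)"
      using h x'(1) unfolding E_def by (auto dest: abs_le_D1)
    then have "- (2 * L * (x \<bullet> n)) \<le> c - hmean n \<rho> x"
      by linarith
    moreover have "\<bar>\<rho> x\<bar> \<le> M"
      using M cball_K[OF x'(1)] \<open>x \<in> cball x' e\<close> by blast
    ultimately show "0 \<le> halfspace_margin n \<rho> c s x"
      unfolding halfspace_margin_def add_diff_eq[symmetric]
      by (intro margin_nonneg_low_latitude[OF x(2) _ lipschitz_on_nonneg[OF lip] _ s])
  qed
  note margin_nonneg = this
  have "\<forall>\<^sub>F s in at_top. \<forall>x\<in>sphere 0 1. 0 \<le> x \<bullet> n \<longrightarrow> x \<bullet> n < \<eta> \<longrightarrow> 0 \<le> halfspace_margin n \<rho> c s x"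
    using eventually_ge_at_top by (rule eventually_mono) (rule margin_nonneg)
  moreover have "0 < \<eta>" "\<eta> \<le> 1"
    unfolding \<eta>_def using e(1) by auto
  ultimately show ?thesis
    by blast
qed

section \<open>Away from the equator\<close>

lemma closure_sublevel_subset:
  fixes F :: "'a::metric_space \<Rightarrow> real"
  assumes "closure \<Omega> \<subseteq> \<Omega> \<union> V1 \<union> V2" "closed V1"
    and "\<forall>q\<in>V2. filterlim F at_top (at q within \<Omega>)"
  shows "closure {x \<in> \<Omega> \<union> V1. F x < k} \<subseteq> \<Omega> \<union> V1"
proof
  fix p assume p: "p \<in> closure {x \<in> \<Omega> \<union> V1. F x < k}"
  have "closure {x \<in> \<Omega> \<union> V1. F x < k} \<subseteq> closure (\<Omega> \<union> V1)"
    by (rule closure_mono) auto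
  also have "\<dots> = closure \<Omega> \<union> V1"
    using assms(2) by (simp add: closure_Un closure_closed)
  finally have "p \<in> closure \<Omega> \<union> V1"
    using p by blast
  show "p \<in> \<Omega> \<union> V1"
  proof (rule ccontr)
    assume np: "p \<notin> \<Omega> \<union> V1"
    then have "p \<in> V2"
      using \<open>p \<in> closure \<Omega> \<union> V1\<close> assms(1) by blast
    then have "\<forall>\<^sub>F x in at p within \<Omega>. k \<le> F x"
      using assms(3) unfolding filterlim_at_top by blast
    then obtain d where d: "d > 0" "\<And>x. x \<in> \<Omega> \<Longrightarrow> x \<noteq> p \<Longrightarrow> dist x p < d \<Longrightarrow> k \<le> F x"
      by (auto simp: eventually_at)
    obtain d' where d': "d' > 0" "ball p d' \<subseteq> - V1"
      using np assms(2) open_contains_ball[of "- V1"] by blast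
    have "min d d' > 0"
      using d(1) d'(1) by simp
    then obtain x where x: "x \<in> \<Omega> \<union> V1" "F x < k" "dist x p < min d d'"
      using p unfolding closure_approachable by blast
    then have "x \<notin> V1"
      using d'(2) by (auto simp: dist_commute)
    then show False
      using d(2)[of x] x np by auto
  qed
qed

lemma bounded_below_where_gradient_bounded:
  fixes \<rho> :: "'a::euclidean_space \<Rightarrow> real"
  assumes "closure \<Omega> \<subseteq> \<Omega> \<union> V1 \<union> V2" "compact V1" "bounded \<Omega>"
    and "\<Omega> \<union> V1 \<subseteq> U" "continuous_on U \<rho>"
    and "\<forall>q\<in>V2. filterlim (\<lambda>x. exp (2 * \<rho> x) + (norm (sgrad \<rho> x))\<^sup>2) at_top (at q within \<Omega>)"
  shows "\<exists>M. \<forall>x\<in>\<Omega> \<union> V1. norm (sgrad \<rho> x) < u0 \<longrightarrow> - M \<le> \<rho> x"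
proof -
  define F where "F x = exp (2 * \<rho> x) + (norm (sgrad \<rho> x))\<^sup>2" for x
  define S where "S = {x \<in> \<Omega> \<union> V1. F x < 1 + u0\<^sup>2}"
  have "closure S \<subseteq> \<Omega> \<union> V1"
    unfolding S_def F_def using assms(1) compact_imp_closed[OF assms(2)] assms(6)
    by (rule closure_sublevel_subset)
  have "bounded (\<Omega> \<union> V1)"
    using assms(2,3) by (simp add: compact_imp_bounded)
  then have compact: "compact (closure S)"
    unfolding compact_closure by (rule bounded_subset) (auto simp: S_def)
  have cont: "continuous_on (closure S) \<rho>"
    using assms(5) by (rule continuous_on_subset) (use \<open>closure S \<subseteq> \<Omega> \<union> V1\<close> assms(4) in blast)
  obtain M where M: "M \<ge> 0" "\<And>x. x \<in> closure S \<Longrightarrow> norm (\<rho> x) \<le> M"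
    using continuous_on_compact_bound[OF compact cont] by metis
  have "- M \<le> \<rho> x" if "x \<in> \<Omega> \<union> V1" "norm (sgrad \<rho> x) < u0" for x
  proof (cases "x \<in> S")
    case True
    then have "norm (\<rho> x) \<le> M"
      using M(2) closure_subset by blast
    then show ?thesis
      by simp
  next
    case False
    then have "1 + u0\<^sup>2 \<le> F x"
      using that(1) unfolding S_def by auto
    moreover have "(norm (sgrad \<rho> x))\<^sup>2 < u0\<^sup>2"
      using that(2) by (simp add: power_strict_mono)
    ultimately have "1 < exp (2 * \<rho> x)"
      unfolding F_def by linarith
    then show ?thesis
      using M(1) by simp
  qed
  then show ?thesis
    by blast
qed

lemma halfspace_margin_nonneg_off_equator:
  fixes n :: "'a::euclidean_space" and \<rho> :: "'a \<Rightarrow> real"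
  assumes "0 < \<eta>" "\<eta> \<le> 1" "norm n = 1"
    and T: "\<forall>x\<in>T. norm x = 1 \<and> \<eta> \<le> x \<bullet> n"
    and low: "\<forall>x\<in>T. norm (sgrad \<rho> x) < 4 / \<eta> \<longrightarrow> - M \<le> \<rho> x"
  shows "\<forall>\<^sub>F s in at_top. \<forall>x\<in>T. 0 \<le> halfspace_margin n \<rho> c s x"
proof -
  define u0 where "u0 = 4 / \<eta>"
  have "\<forall>x\<in>T. 0 \<le> halfspace_margin n \<rho> c s x"
    if s: "max (2 * c\<^sup>2 / \<eta>) (2 * exp M * (exp M * (1/2 + u0) + \<bar>c\<bar>) / \<eta>) \<le> s" for s
  proof
    fix x assume "x \<in> T"
    then have x: "norm x = 1" "\<eta> \<le> x \<bullet> n" "x \<bullet> n \<le> 1"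
      using T assms(3) Cauchy_Schwarz_ineq2[of x n] by auto
    have g: "\<bar>sgrad \<rho> x \<bullet> n\<bar> \<le> norm (sgrad \<rho> x)"
      using assms(3) Cauchy_Schwarz_ineq2[of "sgrad \<rho> x" n] by simp
    show "0 \<le> halfspace_margin n \<rho> c s x"
      unfolding halfspace_margin_eq
    proof (cases "norm (sgrad \<rho> x) < u0")
      case True
      then have "\<bar>sgrad \<rho> x \<bullet> n\<bar> \<le> u0" "- M \<le> \<rho> x"
        using g low \<open>x \<in> T\<close> unfolding u0_def by auto
      then show "0 \<le> x \<bullet> n * (s * exp (\<rho> x) + exp (- \<rho> x) * ((norm (sgrad \<rho> x))\<^sup>2 - 1)) / 2
          + c + exp (- \<rho> x) * (sgrad \<rho> x \<bullet> n)"
        using s by (intro margin_nonneg_flat_gradient[OF assms(1) x(2,3)]) auto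
    next
      case False
      then have "4 \<le> \<eta> * norm (sgrad \<rho> x)"
        using assms(1) unfolding u0_def by (simp add: field_simps)
      then show "0 \<le> x \<bullet> n * (s * exp (\<rho> x) + exp (- \<rho> x) * ((norm (sgrad \<rho> x))\<^sup>2 - 1)) / 2
          + c + exp (- \<rho> x) * (sgrad \<rho> x \<bullet> n)"
        using margin_nonneg_steep_gradient[OF assms(1) x(2) assms(2) g] s by auto
    qed
  qed
  note margin_nonneg = this
  show ?thesis
    using eventually_ge_at_top by (rule eventually_mono) (rule margin_nonneg)
qed

lemma halfspace_margin_eventually_nonneg:
  fixes n :: "'a::euclidean_space" and \<rho> :: "'a \<Rightarrow> real"
  assumes n: "norm n = 1" and U: "open U" "\<Omega> \<union> V1 \<subseteq> U" "Ck 2 U \<rho>"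
    and V1: "compact V1" "{x \<in> sphere 0 1. x \<bullet> n = 0} \<subseteq> V1"
    and hemisphere: "\<forall>x\<in>\<Omega> \<union> V1. norm x = 1 \<and> 0 \<le> x \<bullet> n"
    and bdry: "closure \<Omega> \<subseteq> \<Omega> \<union> V1 \<union> V2"
    and h: "\<forall>x\<in>sphere 0 1. x \<bullet> n = 0 \<longrightarrow> hmean n \<rho> x = c"
    and blowup: "\<forall>q\<in>V2. filterlim (\<lambda>x. exp (2 * \<rho> x) + (norm (sgrad \<rho> x))\<^sup>2) at_top (at q within \<Omega>)"
  shows "\<forall>\<^sub>F s in at_top. \<forall>x\<in>\<Omega> \<union> V1. 0 \<le> halfspace_margin n \<rho> c s x"
proof -
  obtain \<eta> where \<eta>: "0 < \<eta>" "\<eta> \<le> 1" and near: "\<forall>\<^sub>F s in at_top. \<forall>x\<in>sphere 0 1.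
      0 \<le> x \<bullet> n \<longrightarrow> x \<bullet> n < \<eta> \<longrightarrow> 0 \<le> halfspace_margin n \<rho> c s x"
    using halfspace_margin_nonneg_near_equator[OF n U(1) _ U(3) h] V1(2) U(2) by blast
  have "bounded \<Omega>" "continuous_on U \<rho>"
    using hemisphere U(3) by (auto simp: bounded_iff numeral_2_eq_2)
  then obtain M where "\<forall>x\<in>\<Omega> \<union> V1. norm (sgrad \<rho> x) < 4 / \<eta> \<longrightarrow> - M \<le> \<rho> x"
    using bounded_below_where_gradient_bounded[OF bdry V1(1) _ U(2) _ blowup] by blast
  then have far: "\<forall>\<^sub>F s in at_top. \<forall>x\<in>{x \<in> \<Omega> \<union> V1. \<eta> \<le> x \<bullet> n}. 0 \<le> halfspace_margin n \<rho> c s x"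
    using hemisphere by (intro halfspace_margin_nonneg_off_equator[OF \<eta> n]) auto
  show ?thesis
    using eventually_conj[OF near far]
  proof (rule eventually_mono)
    fix s assume "(\<forall>x\<in>sphere 0 1. 0 \<le> x \<bullet> n \<longrightarrow> x \<bullet> n < \<eta> \<longrightarrow> 0 \<le> halfspace_margin n \<rho> c s x)
      \<and> (\<forall>x\<in>{x \<in> \<Omega> \<union> V1. \<eta> \<le> x \<bullet> n}. 0 \<le> halfspace_margin n \<rho> c s x)"
    then have near_s: "\<forall>x\<in>sphere 0 1. 0 \<le> x \<bullet> n \<longrightarrow> x \<bullet> n < \<eta> \<longrightarrow> 0 \<le> halfspace_margin n \<rho> c s x"
      and far_s: "\<forall>x\<in>{x \<in> \<Omega> \<union> V1. \<eta> \<le> x \<bullet> n}. 0 \<le> halfspace_margin n \<rho> c s x"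
      by blast+
    show "\<forall>x\<in>\<Omega> \<union> V1. 0 \<le> halfspace_margin n \<rho> c s x"
    proof
      fix x assume x: "x \<in> \<Omega> \<union> V1"
      then have "x \<in> sphere 0 1" "0 \<le> x \<bullet> n"
        using hemisphere by auto
      then show "0 \<le> halfspace_margin n \<rho> c s x"
        using near_s far_s x by (cases "x \<bullet> n < \<eta>") auto
    qed
  qed
qed

lemma phi_image_in_halfspace_eventually:
  assumes "S \<subseteq> sphere 0 1" "\<forall>\<^sub>F s in at_top. \<forall>x\<in>S. 0 \<le> halfspace_margin n \<rho> c s x"
  shows "\<exists>t0\<ge>0. \<forall>t>t0. phi \<rho> t ` S \<subseteq> {y \<in> hyperbolic. lorentz y (0, n) \<ge> - exp (- t) * c}"
proof -
  obtain s0 where s0: "\<And>s x. s0 \<le> s \<Longrightarrow> x \<in> S \<Longrightarrow> 0 \<le> halfspace_margin n \<rho> c s x"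
    using assms(2) unfolding eventually_at_top_linorder by blast
  show ?thesis
  proof (intro exI[of _ "ln (max 1 s0) / 2"] conjI allI impI subsetI)
    fix t y assume t: "ln (max 1 s0) / 2 < t" and "y \<in> phi \<rho> t ` S"
    then obtain x where x: "x \<in> S" and y: "y = phi \<rho> t x"
      by blast
    have "max 1 s0 = exp (ln (max 1 s0))"
      by simp
    also have "\<dots> < exp (2 * t)"
      by (rule exp_less_mono) (use t in simp)
    finally have "s0 \<le> exp (2 * t)"
      by linarith
    then show "y \<in> {y \<in> hyperbolic. lorentz y (0, n) \<ge> - exp (- t) * c}"
      unfolding y using x assms(1) by (intro phi_in_halfspace s0) auto
  qed simp
qed

theorem mainTheorem8:
  fixes n :: "'a::euclidean_space" and \<Omega> V1 V2 :: "'a set"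
    and \<rho> :: "'a \<Rightarrow> real" and \<alpha> c :: real
  assumes dim: "DIM('a) \<ge> 4"
    and n: "norm n = 1"
    and \<Omega>_open: "openin (top_of_set (sphere 0 1)) \<Omega>"
    and \<Omega>_conn: "connected \<Omega>" and \<Omega>_ne: "\<Omega> \<noteq> {}"
    and \<Omega>_sub: "\<Omega> \<subseteq> {x \<in> sphere 0 1. x \<bullet> n > 0}"
    and bdry: "closure \<Omega> - \<Omega> = V1 \<union> V2" and disj: "V1 \<inter> V2 = {}"
    and V1: "compact V1" "V1 \<subseteq> sphere 0 1" "submanifold (DIM('a) - 2) V1"
      "{x \<in> sphere 0 1. x \<bullet> n = 0} \<subseteq> V1"
    and V2: "\<exists>F. finite F \<and> pairwise disjnt F \<and> \<Union>F = V2 \<and>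
      (\<forall>M\<in>F. compact M \<and> M \<subseteq> sphere 0 1 \<and> (\<exists>k. submanifold k M))"
    and \<alpha>: "0 < \<alpha>" "\<alpha> < 1"
    and reg: "\<exists>U. \<Omega> \<union> V1 \<subseteq> U \<and> C2alpha_on \<alpha> U \<rho>"
    and h: "\<forall>x\<in>sphere 0 1. x \<bullet> n = 0 \<longrightarrow> hmean n \<rho> x = c"
    and blowup: "\<forall>q\<in>V2. filterlim (\<lambda>x. exp (2 * \<rho> x) + (norm (sgrad \<rho> x))\<^sup>2) at_top (at q within \<Omega>)"
  shows "\<exists>t0\<ge>0. \<forall>t>t0. phi \<rho> t ` (\<Omega> \<union> (V1 - {x \<in> sphere 0 1. x \<bullet> n = 0}))
           \<subseteq> {y \<in> hyperbolic. lorentz y (0, n) \<ge> - exp (- t) * c}"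
proof -
  obtain U where U: "open U" "\<Omega> \<union> V1 \<subseteq> U" "Ck 2 U \<rho>"
    using reg unfolding C2alpha_on_def by blast
  have "closed {x :: 'a. 0 \<le> x \<bullet> n}"
    by (intro closed_Collect_le continuous_intros)
  then have "closure \<Omega> \<subseteq> {x. 0 \<le> x \<bullet> n}"
    using \<Omega>_sub by (intro closure_minimal) auto
  moreover have "\<Omega> \<union> V1 \<subseteq> closure \<Omega>" "\<Omega> \<union> V1 \<subseteq> sphere 0 1"
    using bdry closure_subset openin_subset[OF \<Omega>_open] V1(2) by auto
  ultimately have hemisphere: "\<forall>x\<in>\<Omega> \<union> V1. norm x = 1 \<and> 0 \<le> x \<bullet> n"
    by auto
  have "closure \<Omega> \<subseteq> \<Omega> \<union> V1 \<union> V2"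
    using bdry by blast
  then have "\<forall>\<^sub>F s in at_top. \<forall>x\<in>\<Omega> \<union> V1. 0 \<le> halfspace_margin n \<rho> c s x"
    by (rule halfspace_margin_eventually_nonneg[OF n U V1(1,4) hemisphere _ h blowup])
  then obtain t0 where "t0 \<ge> 0" and t0:
    "\<And>t. t > t0 \<Longrightarrow> phi \<rho> t ` (\<Omega> \<union> V1) \<subseteq> {y \<in> hyperbolic. lorentz y (0, n) \<ge> - exp (- t) * c}"
    using phi_image_in_halfspace_eventually \<open>\<Omega> \<union> V1 \<subseteq> sphere 0 1\<close> by blast
  have "phi \<rho> t ` (\<Omega> \<union> (V1 - {x \<in> sphere 0 1. x \<bullet> n = 0})) \<subseteq> phi \<rho> t ` (\<Omega> \<union> V1)" for t
    by blast
  then show ?thesis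
    using \<open>t0 \<ge> 0\<close> t0 by blast
qed

end
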